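(* Assume $\gamma<\frac14$. If (a) $\rho^s_{in}+\rho^s_{out}<\frac12$ and (b) $|g(S_s\cap\mathcal T_r)-\mu_r|\ge(1-4\gamma)|g(S_s\cap\mathcal T_r)-\mu_s|$ for all $r\ne s$, then $$|g(S_s)-\mu_s|\le 2(1-\rho^s_{out})|g(S_s\cap\mathcal T_s)-\mu_s|+\frac{2}{1-4\gamma}\sum_{r\ne s}\rho^s_{in}(r)|g(S_s\cap\mathcal T_r)-\mu_r|.$$
   Context: Points $x_1,\dots,x_N$ are real numbers, each drawn from one of $\beta$ distributions with distinct means $\mu_1,\dots,\mu_\beta$; $\mathcal T_s$ is the set of points from distribution $s$, $n_s=|\mathcal T_s|$. $\nu_1,\dots,\nu_\beta$ are real cluster centers, $S_r=\{x_i:|x_i-\nu_r|\le|x_i-\nu_s|\ \forall s\}$, and $S_s$ is assumed nonempty. For a nonempty set $S$, $g(S)=\frac1{|S|}\sum_{x\in S}x$ (terms with empty $S_s\cap\mathcal T_r$ have coefficient zero). $\gamma=\max_{s,\,r\ne s}\frac{|\mu_s-\nu_s|}{|\mu_r-\mu_s|}$. $\rho^s_{in}(r)=\frac{|\mathcal T_r\cap S_s|}{n_s}$, $\rho^s_{in}=\sum_{r\ne s}\rho^s_{in}(r)$, $\rho^s_{out}=\frac{\sum_{r\ne s}|\mathcal T_s\cap S_r|}{n_s}$. *)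

theory Defs
  imports Complex_Main
begin

(* Points are indexed by i < N; lab i < beta is the distribution point i was drawn from. *)

definition Tset :: "nat \<Rightarrow> (nat \<Rightarrow> nat) \<Rightarrow> nat \<Rightarrow> nat set" where
  "Tset N lab s = {i. i < N \<and> lab i = s}"

definition Sset :: "nat \<Rightarrow> nat \<Rightarrow> (nat \<Rightarrow> real) \<Rightarrow> (nat \<Rightarrow> real) \<Rightarrow> nat \<Rightarrow> nat set" where
  "Sset N \<beta> x \<nu> r = {i. i < N \<and> (\<forall>s<\<beta>. \<bar>x i - \<nu> r\<bar> \<le> \<bar>x i - \<nu> s\<bar>)}"

definition gmean :: "(nat \<Rightarrow> real) \<Rightarrow> nat set \<Rightarrow> real" where
  "gmean x A = (\<Sum>i\<in>A. x i) / real (card A)"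

definition gamma :: "nat \<Rightarrow> (nat \<Rightarrow> real) \<Rightarrow> (nat \<Rightarrow> real) \<Rightarrow> real" where
  "gamma \<beta> \<mu> \<nu> = Max (insert 0 {\<bar>\<mu> s - \<nu> s\<bar> / \<bar>\<mu> r - \<mu> s\<bar> | s r. s < \<beta> \<and> r < \<beta> \<and> r \<noteq> s})"

definition rho_in_r :: "nat \<Rightarrow> nat \<Rightarrow> (nat \<Rightarrow> nat) \<Rightarrow> (nat \<Rightarrow> real) \<Rightarrow> (nat \<Rightarrow> real) \<Rightarrow> nat \<Rightarrow> nat \<Rightarrow> real" where
  "rho_in_r N \<beta> lab x \<nu> s r =
     real (card (Tset N lab r \<inter> Sset N \<beta> x \<nu> s)) / real (card (Tset N lab s))"

definition rho_in :: "nat \<Rightarrow> nat \<Rightarrow> (nat \<Rightarrow> nat) \<Rightarrow> (nat \<Rightarrow> real) \<Rightarrow> (nat \<Rightarrow> real) \<Rightarrow> nat \<Rightarrow> real" where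
  "rho_in N \<beta> lab x \<nu> s = (\<Sum>r\<in>{..<\<beta>} - {s}. rho_in_r N \<beta> lab x \<nu> s r)"

definition rho_out :: "nat \<Rightarrow> nat \<Rightarrow> (nat \<Rightarrow> nat) \<Rightarrow> (nat \<Rightarrow> real) \<Rightarrow> (nat \<Rightarrow> real) \<Rightarrow> nat \<Rightarrow> real" where
  "rho_out N \<beta> lab x \<nu> s =
     real (\<Sum>r\<in>{..<\<beta>} - {s}. card (Tset N lab s \<inter> Sset N \<beta> x \<nu> r)) / real (card (Tset N lab s))"

end

theory Submission
  imports Defs
begin

(* Splitting the cell S = S_s by true label writes g(S) - mu_s as the convex combination
   sum_r w_r (g(S \<inter> T_r) - mu_s) with weights w_r = |S \<inter> T_r| / |S|.  Every point of T_s
   outside S lies in some other cell, so |S| \<ge> |S \<inter> T_s| \<ge> (1 - rho_out) n_s \<ge> n_s / 2.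
   Hence w_r \<le> 2 rho_in(r) for r \<noteq> s, which together with (b) bounds the terms r \<noteq> s, while
   w_s \<le> 1 \<le> 2 (1 - rho_out) bounds the term r = s. *)

lemma ex_Sset_mem:
  assumes "i < N" "0 < \<beta>"
  shows "\<exists>r<\<beta>. i \<in> Sset N \<beta> x \<nu> r"
proof -
  let ?D = "(\<lambda>r. \<bar>x i - \<nu> r\<bar>) ` {..<\<beta>}"
  have "Min ?D \<in> ?D"
    using assms by (intro Min_in) auto
  then obtain r where r: "r < \<beta>" "Min ?D = \<bar>x i - \<nu> r\<bar>"
    by auto
  then have "\<forall>t<\<beta>. \<bar>x i - \<nu> r\<bar> \<le> \<bar>x i - \<nu> t\<bar>"
    by (metis Min_le finite_imageI finite_lessThan image_eqI lessThan_iff)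
  with r assms show ?thesis
    unfolding Sset_def by auto
qed

lemma sum_diff_eq_card_mult_gmean_diff:
  assumes "finite A"
  shows "(\<Sum>i\<in>A. x i - c) = real (card A) * (gmean x A - c)"
proof (cases "A = {}")
  case False
  with assms have "card A > 0"
    by (simp add: card_gt_0_iff)
  then show ?thesis
    unfolding gmean_def by (simp add: sum_subtractf field_simps)
qed simp

lemma card_mult_abs_gmean_diff_le_sum_classes:
  assumes "finite A" "finite R" "f ` A \<subseteq> R"
  shows "real (card A) * \<bar>gmean x A - c\<bar>
    \<le> (\<Sum>r\<in>R. real (card {i\<in>A. f i = r}) * \<bar>gmean x {i\<in>A. f i = r} - c\<bar>)"
proof -
  have "real (card A) * (gmean x A - c) = (\<Sum>i\<in>A. x i - c)"
    using assms by (simp add: sum_diff_eq_card_mult_gmean_diff)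
  also have "\<dots> = (\<Sum>r\<in>R. \<Sum>i\<in>{i\<in>A. f i = r}. x i - c)"
    using assms by (rule sum.group[symmetric])
  also have "\<dots> = (\<Sum>r\<in>R. real (card {i\<in>A. f i = r}) * (gmean x {i\<in>A. f i = r} - c))"
    using assms by (simp add: sum_diff_eq_card_mult_gmean_diff)
  finally have "real (card A) * \<bar>gmean x A - c\<bar>
      = \<bar>\<Sum>r\<in>R. real (card {i\<in>A. f i = r}) * (gmean x {i\<in>A. f i = r} - c)\<bar>"
    by (metis abs_mult abs_of_nat)
  also have "\<dots> \<le> (\<Sum>r\<in>R. real (card {i\<in>A. f i = r}) * \<bar>gmean x {i\<in>A. f i = r} - c\<bar>)"
    by (rule order_trans[OF sum_abs]) (simp add: abs_mult)
  finally show ?thesis .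
qed

lemma card_Tset_le_card_cell_plus_escaped:
  assumes "s < \<beta>"
  shows "card (Tset N lab s)
    \<le> card (Sset N \<beta> x \<nu> s \<inter> Tset N lab s)
      + (\<Sum>r\<in>{..<\<beta>} - {s}. card (Tset N lab s \<inter> Sset N \<beta> x \<nu> r))"
proof -
  have fin: "finite (Tset N lab s)"
    unfolding Tset_def by simp
  have "Tset N lab s \<subseteq> (Sset N \<beta> x \<nu> s \<inter> Tset N lab s)
      \<union> (\<Union>r\<in>{..<\<beta>} - {s}. Tset N lab s \<inter> Sset N \<beta> x \<nu> r)"
  proof
    fix i assume i: "i \<in> Tset N lab s"
    then obtain r where "r < \<beta>" "i \<in> Sset N \<beta> x \<nu> r"
      using ex_Sset_mem[of i N \<beta>] assms unfolding Tset_def by auto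
    with i show "i \<in> (Sset N \<beta> x \<nu> s \<inter> Tset N lab s)
        \<union> (\<Union>r\<in>{..<\<beta>} - {s}. Tset N lab s \<inter> Sset N \<beta> x \<nu> r)"
      by (cases "r = s") auto
  qed
  then have "card (Tset N lab s) \<le> card ((Sset N \<beta> x \<nu> s \<inter> Tset N lab s)
      \<union> (\<Union>r\<in>{..<\<beta>} - {s}. Tset N lab s \<inter> Sset N \<beta> x \<nu> r))"
    using fin by (intro card_mono) auto
  also have "\<dots> \<le> card (Sset N \<beta> x \<nu> s \<inter> Tset N lab s)
      + card (\<Union>r\<in>{..<\<beta>} - {s}. Tset N lab s \<inter> Sset N \<beta> x \<nu> r)"
    by (rule card_Un_le)
  also have "\<dots> \<le> card (Sset N \<beta> x \<nu> s \<inter> Tset N lab s)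
      + (\<Sum>r\<in>{..<\<beta>} - {s}. card (Tset N lab s \<inter> Sset N \<beta> x \<nu> r))"
    by (intro add_left_mono card_UN_le) simp
  finally show ?thesis .
qed

lemma one_minus_rho_out_mult_card_le:
  assumes "s < \<beta>" "card (Tset N lab s) > 0"
  shows "(1 - rho_out N \<beta> lab x \<nu> s) * real (card (Tset N lab s))
    \<le> real (card (Sset N \<beta> x \<nu> s \<inter> Tset N lab s))"
proof -
  let ?n = "real (card (Tset N lab s))"
  let ?escaped = "\<Sum>r\<in>{..<\<beta>} - {s}. card (Tset N lab s \<inter> Sset N \<beta> x \<nu> r)"
  have "?n \<le> real (card (Sset N \<beta> x \<nu> s \<inter> Tset N lab s)) + real ?escaped"
    using card_Tset_le_card_cell_plus_escaped[OF assms(1), of N lab x \<nu>]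
    by (metis of_nat_add of_nat_le_iff)
  moreover have "real ?escaped = rho_out N \<beta> lab x \<nu> s * ?n"
    using assms(2) unfolding rho_out_def by simp
  ultimately show ?thesis
    by (simp add: algebra_simps)
qed

lemma card_Tset_le_twice_card_Sset:
  assumes "s < \<beta>" "card (Tset N lab s) > 0" "rho_out N \<beta> lab x \<nu> s < 1/2"
  shows "real (card (Tset N lab s)) \<le> 2 * real (card (Sset N \<beta> x \<nu> s))"
proof -
  let ?n = "real (card (Tset N lab s))"
  have "?n / 2 \<le> (1 - rho_out N \<beta> lab x \<nu> s) * ?n"
    using assms(3) mult_right_mono[of "1/2" "1 - rho_out N \<beta> lab x \<nu> s" ?n] by simp
  also have "\<dots> \<le> real (card (Sset N \<beta> x \<nu> s \<inter> Tset N lab s))"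
    using assms(1,2) by (rule one_minus_rho_out_mult_card_le)
  also have "\<dots> \<le> real (card (Sset N \<beta> x \<nu> s))"
    unfolding Sset_def by (simp add: card_mono)
  finally show ?thesis
    by simp
qed

lemma class_weight_le_twice_rho_in_r:
  assumes "s < \<beta>" "card (Tset N lab s) > 0" "rho_out N \<beta> lab x \<nu> s < 1/2"
  shows "real (card (Sset N \<beta> x \<nu> s \<inter> Tset N lab r)) / real (card (Sset N \<beta> x \<nu> s))
    \<le> 2 * rho_in_r N \<beta> lab x \<nu> s r"
proof -
  let ?n = "real (card (Tset N lab s))"
  have "real (card (Sset N \<beta> x \<nu> s \<inter> Tset N lab r)) / real (card (Sset N \<beta> x \<nu> s))
      \<le> real (card (Sset N \<beta> x \<nu> s \<inter> Tset N lab r)) / (?n / 2)"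
    using card_Tset_le_twice_card_Sset[OF assms] assms(2) by (intro divide_left_mono) auto
  then show ?thesis
    unfolding rho_in_r_def by (simp add: Int_commute ac_simps)
qed

lemma abs_gmean_Sset_diff_le_weighted_classes:
  assumes "\<And>i. i < N \<Longrightarrow> lab i < \<beta>" "Sset N \<beta> x \<nu> s \<noteq> {}"
  shows "\<bar>gmean x (Sset N \<beta> x \<nu> s) - c\<bar>
    \<le> (\<Sum>r<\<beta>. real (card (Sset N \<beta> x \<nu> s \<inter> Tset N lab r)) / real (card (Sset N \<beta> x \<nu> s))
        * \<bar>gmean x (Sset N \<beta> x \<nu> s \<inter> Tset N lab r) - c\<bar>)"
proof -
  let ?S = "Sset N \<beta> x \<nu> s"
  have fin: "finite ?S"
    unfolding Sset_def by simp
  with assms(2) have m_pos: "real (card ?S) > 0"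
    by (simp add: card_gt_0_iff)
  have "{i\<in>?S. lab i = r} = ?S \<inter> Tset N lab r" for r
    unfolding Sset_def Tset_def by auto
  moreover have "lab ` ?S \<subseteq> {..<\<beta>}"
    using assms(1) unfolding Sset_def by auto
  ultimately have "real (card ?S) * \<bar>gmean x ?S - c\<bar>
      \<le> (\<Sum>r<\<beta>. real (card (?S \<inter> Tset N lab r)) * \<bar>gmean x (?S \<inter> Tset N lab r) - c\<bar>)"
    using card_mult_abs_gmean_diff_le_sum_classes[OF fin finite_lessThan, where f = lab] by simp
  with m_pos have "\<bar>gmean x ?S - c\<bar>
      \<le> (\<Sum>r<\<beta>. real (card (?S \<inter> Tset N lab r)) * \<bar>gmean x (?S \<inter> Tset N lab r) - c\<bar>)
        / real (card ?S)"
    by (simp add: pos_le_divide_eq mult.commute)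
  then show ?thesis
    by (simp add: sum_divide_distrib)
qed

lemma class_weight_mult_abs_diff_le:
  assumes "s < \<beta>" "card (Tset N lab s) > 0" "rho_out N \<beta> lab x \<nu> s < 1/2" "0 < \<kappa>"
    and sep: "Sset N \<beta> x \<nu> s \<inter> Tset N lab r \<noteq> {} \<Longrightarrow>
      \<kappa> * \<bar>gmean x (Sset N \<beta> x \<nu> s \<inter> Tset N lab r) - a\<bar>
        \<le> \<bar>gmean x (Sset N \<beta> x \<nu> s \<inter> Tset N lab r) - b\<bar>"
  shows "real (card (Sset N \<beta> x \<nu> s \<inter> Tset N lab r)) / real (card (Sset N \<beta> x \<nu> s))
      * \<bar>gmean x (Sset N \<beta> x \<nu> s \<inter> Tset N lab r) - a\<bar>
    \<le> 2 / \<kappa> * (rho_in_r N \<beta> lab x \<nu> s r * \<bar>gmean x (Sset N \<beta> x \<nu> s \<inter> Tset N lab r) - b\<bar>)"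
proof (cases "Sset N \<beta> x \<nu> s \<inter> Tset N lab r = {}")
  case True
  with \<open>0 < \<kappa>\<close> show ?thesis
    unfolding rho_in_r_def by simp
next
  case False
  let ?g = "gmean x (Sset N \<beta> x \<nu> s \<inter> Tset N lab r)"
  have "\<bar>?g - a\<bar> \<le> \<bar>?g - b\<bar> / \<kappa>"
    using sep[OF False] \<open>0 < \<kappa>\<close> by (simp add: pos_le_divide_eq mult.commute)
  with class_weight_le_twice_rho_in_r[OF assms(1-3)]
  have "real (card (Sset N \<beta> x \<nu> s \<inter> Tset N lab r)) / real (card (Sset N \<beta> x \<nu> s)) * \<bar>?g - a\<bar>
      \<le> 2 * rho_in_r N \<beta> lab x \<nu> s r * (\<bar>?g - b\<bar> / \<kappa>)"
    by (rule mult_mono) (simp_all add: rho_in_r_def)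
  then show ?thesis
    by (simp add: ac_simps)
qed

lemma rho_in_nonneg: "rho_in N \<beta> lab x \<nu> s \<ge> 0"
  unfolding rho_in_def rho_in_r_def by (simp add: sum_nonneg)

lemma own_class_weight_le_twice_one_minus_rho_out:
  assumes "rho_out N \<beta> lab x \<nu> s \<le> 1/2"
  shows "real (card (Sset N \<beta> x \<nu> s \<inter> Tset N lab s)) / real (card (Sset N \<beta> x \<nu> s))
    \<le> 2 * (1 - rho_out N \<beta> lab x \<nu> s)"
proof -
  have "card (Sset N \<beta> x \<nu> s \<inter> Tset N lab s) \<le> card (Sset N \<beta> x \<nu> s)"
    unfolding Sset_def by (simp add: card_mono)
  then have "real (card (Sset N \<beta> x \<nu> s \<inter> Tset N lab s)) / real (card (Sset N \<beta> x \<nu> s)) \<le> 1"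
    by (auto simp: divide_le_eq_1)
  with assms show ?thesis
    by simp
qed

theorem lemma10:
  fixes N \<beta> s :: nat and lab :: "nat \<Rightarrow> nat" and x \<mu> \<nu> :: "nat \<Rightarrow> real"
  assumes lab: "\<And>i. i < N \<Longrightarrow> lab i < \<beta>"
    and mu_distinct: "inj_on \<mu> {..<\<beta>}"
    and s: "s < \<beta>"
    and S_ne: "Sset N \<beta> x \<nu> s \<noteq> {}"
    and n_pos: "card (Tset N lab s) > 0"
    and gam: "gamma \<beta> \<mu> \<nu> < 1/4"
    and a: "rho_in N \<beta> lab x \<nu> s + rho_out N \<beta> lab x \<nu> s < 1/2"
    and b: "\<And>r. r < \<beta> \<Longrightarrow> r \<noteq> s \<Longrightarrow> Sset N \<beta> x \<nu> s \<inter> Tset N lab r \<noteq> {} \<Longrightarrow>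
              \<bar>gmean x (Sset N \<beta> x \<nu> s \<inter> Tset N lab r) - \<mu> r\<bar>
                \<ge> (1 - 4 * gamma \<beta> \<mu> \<nu>) * \<bar>gmean x (Sset N \<beta> x \<nu> s \<inter> Tset N lab r) - \<mu> s\<bar>"
  shows "\<bar>gmean x (Sset N \<beta> x \<nu> s) - \<mu> s\<bar>
    \<le> 2 * (1 - rho_out N \<beta> lab x \<nu> s) * \<bar>gmean x (Sset N \<beta> x \<nu> s \<inter> Tset N lab s) - \<mu> s\<bar>
      + 2 / (1 - 4 * gamma \<beta> \<mu> \<nu>) *
        (\<Sum>r\<in>{..<\<beta>} - {s}. rho_in_r N \<beta> lab x \<nu> s r *
           \<bar>gmean x (Sset N \<beta> x \<nu> s \<inter> Tset N lab r) - \<mu> r\<bar>)"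
proof -
  define S where "S = Sset N \<beta> x \<nu> s"
  define w where "w r = real (card (S \<inter> Tset N lab r)) / real (card S)" for r
  define g where "g r = gmean x (S \<inter> Tset N lab r)" for r
  define \<kappa> where "\<kappa> = 1 - 4 * gamma \<beta> \<mu> \<nu>"
  have rho_out_lt: "rho_out N \<beta> lab x \<nu> s < 1/2"
    using a rho_in_nonneg[of N \<beta> lab x \<nu> s] by simp
  have \<kappa>_pos: "\<kappa> > 0"
    using gam unfolding \<kappa>_def by simp
  have "\<bar>gmean x S - \<mu> s\<bar> \<le> (\<Sum>r<\<beta>. w r * \<bar>g r - \<mu> s\<bar>)"
    using abs_gmean_Sset_diff_le_weighted_classes[OF lab S_ne] unfolding S_def w_def g_def .
  also have "\<dots> = w s * \<bar>g s - \<mu> s\<bar> + (\<Sum>r\<in>{..<\<beta>} - {s}. w r * \<bar>g r - \<mu> s\<bar>)"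
    using s by (simp add: sum.remove)
  also have "\<dots> \<le> 2 * (1 - rho_out N \<beta> lab x \<nu> s) * \<bar>g s - \<mu> s\<bar>
      + (\<Sum>r\<in>{..<\<beta>} - {s}. 2 / \<kappa> * (rho_in_r N \<beta> lab x \<nu> s r * \<bar>g r - \<mu> r\<bar>))"
  proof (intro add_mono sum_mono mult_right_mono)
    show "w s \<le> 2 * (1 - rho_out N \<beta> lab x \<nu> s)"
      using own_class_weight_le_twice_one_minus_rho_out rho_out_lt unfolding w_def S_def by simp
  next
    fix r assume "r \<in> {..<\<beta>} - {s}"
    with b[of r] show "w r * \<bar>g r - \<mu> s\<bar> \<le> 2 / \<kappa> * (rho_in_r N \<beta> lab x \<nu> s r * \<bar>g r - \<mu> r\<bar>)"
      using class_weight_mult_abs_diff_le[OF s n_pos rho_out_lt \<kappa>_pos]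
      unfolding w_def g_def S_def \<kappa>_def by (simp add: mult.commute)
  qed simp
  also have "\<dots> = 2 * (1 - rho_out N \<beta> lab x \<nu> s) * \<bar>g s - \<mu> s\<bar>
      + 2 / \<kappa> * (\<Sum>r\<in>{..<\<beta>} - {s}. rho_in_r N \<beta> lab x \<nu> s r * \<bar>g r - \<mu> r\<bar>)"
    by (simp add: sum_distrib_left)
  finally show ?thesis
    unfolding S_def \<kappa>_def g_def .
qed

end
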